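(* Let $G_N=(V,E)$ be a connected, undirected, edge-weighted graph on $N$ nodes, $u\in V$ an initial mutant node, and $r\ge 1$. Then one of the following holds: (1) $\gamma^{\mathrm{Bd}}_r(G_N,u)<\gamma^{\mathrm{Bd}}_r(K_N)$; (2) $\gamma^{\mathrm{dB}}_r(G_N,u)<\gamma^{\mathrm{dB}}_r(K_N)$; (3) $\gamma^{\mathrm{Bd}}_r(G_N,u)=\gamma^{\mathrm{Bd}}_r(K_N)$ and $\gamma^{\mathrm{dB}}_r(G_N,u)=\gamma^{\mathrm{dB}}_r(K_N)$.
   Context: Each edge $\{u,v\}$ has a positive weight $w(u,v)$ and $\deg(u)=\sum_{v} w(u,v)$. Each node is occupied by a resident (fitness 1) or a mutant (fitness $r\ge 1$); $f(u)$ is the fitness at $u$ and $F=\sum_u f(u)$. Moran Birth-death (Bd) process: each step a node $u$ is chosen with probability $f(u)/F$ and its offspring replaces a neighbor $v$ chosen with probability $w(u,v)/\deg(u)$. Moran death-Birth (dB) process: each step a uniformly random node $v$ dies and is replaced by the offspring of a neighbor $u$ chosen with probability $f(u)w(u,v)/\sum_{u'}f(u')w(u',v)$. For a process $p\in\{\mathrm{Bd},\mathrm{dB}\}$, $\gamma^{p}_r(G_N,u)$ is the probability that, starting with a single mutant at $u$ (all other nodes residents), the first step that changes the set of mutant nodes is one in which the mutant at $u$ places its offspring onto a neighboring node (increasing the number of mutants), as opposed to the mutant at $u$ being replaced by a resident. $K_N$ is the unweighted complete graph on $N$ nodes; $\gamma^p_r(K_N)$ is this quantity on $K_N$ (independent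 of the node). *)

theory Defs
  imports Main Complex_Main
begin

text \<open>A weighted undirected graph is given by a finite vertex set V and a
weight function w; w x y > 0 means that {x,y} is an edge with weight w x y.\<close>

definition wgraph :: "'a set \<Rightarrow> ('a \<Rightarrow> 'a \<Rightarrow> real) \<Rightarrow> bool" where
  "wgraph V w \<longleftrightarrow> finite V
     \<and> (\<forall>x y. w x y = w y x)
     \<and> (\<forall>x y. 0 \<le> w x y)
     \<and> (\<forall>x. w x x = 0)
     \<and> (\<forall>x y. w x y > 0 \<longrightarrow> x \<in> V \<and> y \<in> V)"

definition connected_wgraph :: "'a set \<Rightarrow> ('a \<Rightarrow> 'a \<Rightarrow> real) \<Rightarrow> bool" where
  "connected_wgraph V w \<longleftrightarrow>
     (\<forall>x\<in>V. \<forall>y\<in>V. (x, y) \<in> {(a, b). w a b > 0}\<^sup>*)"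

definition complete_w :: "'a set \<Rightarrow> 'a \<Rightarrow> 'a \<Rightarrow> real" where
  "complete_w V x y = (if x \<in> V \<and> y \<in> V \<and> x \<noteq> y then 1 else 0)"

definition wdeg :: "'a set \<Rightarrow> ('a \<Rightarrow> 'a \<Rightarrow> real) \<Rightarrow> 'a \<Rightarrow> real" where
  "wdeg V w x = (\<Sum>y\<in>V. w x y)"

definition fit :: "'a set \<Rightarrow> real \<Rightarrow> 'a \<Rightarrow> real" where
  "fit S r x = (if x \<in> S then r else 1)"

text \<open>One step of the Birth-death process: probability that node x is chosen to
reproduce and its offspring replaces node y (mutant set S).\<close>
definition Bd_rep :: "'a set \<Rightarrow> ('a \<Rightarrow> 'a \<Rightarrow> real) \<Rightarrow> 'a set \<Rightarrow> real \<Rightarrow> 'a \<Rightarrow> 'a \<Rightarrow> real" where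
  "Bd_rep V w S r x y =
     fit S r x / (\<Sum>z\<in>V. fit S r z) * (w x y / wdeg V w x)"

text \<open>One step of the death-Birth process: probability that node y dies and is
replaced by the offspring of node x (mutant set S).\<close>
definition dB_rep :: "'a set \<Rightarrow> ('a \<Rightarrow> 'a \<Rightarrow> real) \<Rightarrow> 'a set \<Rightarrow> real \<Rightarrow> 'a \<Rightarrow> 'a \<Rightarrow> real" where
  "dB_rep V w S r x y =
     1 / real (card V) * (fit S r x * w x y / (\<Sum>z\<in>V. fit S r z * w z y))"

text \<open>Starting from the single mutant at u, the first step changing the mutant set
is either the mutant at u placing offspring on a (resident) neighbour (total
per-step probability inc) or a resident replacing the mutant at u (total per-step
probability dec); all other steps leave the state unchanged.  Hence the
probability that the first changing step is an increase is inc / (inc + dec).\<close>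
definition gamma :: "('a set \<Rightarrow> ('a \<Rightarrow> 'a \<Rightarrow> real) \<Rightarrow> 'a set \<Rightarrow> real \<Rightarrow> 'a \<Rightarrow> 'a \<Rightarrow> real)
    \<Rightarrow> 'a set \<Rightarrow> ('a \<Rightarrow> 'a \<Rightarrow> real) \<Rightarrow> real \<Rightarrow> 'a \<Rightarrow> real" where
  "gamma rep V w r u =
     (let inc = (\<Sum>v\<in>V - {u}. rep V w {u} r u v);
          dec = (\<Sum>v\<in>V - {u}. rep V w {u} r v u)
      in inc / (inc + dec))"

abbreviation gamma_Bd where "gamma_Bd \<equiv> gamma Bd_rep"
abbreviation gamma_dB where "gamma_dB \<equiv> gamma dB_rep"

end

theory Submission
  imports Defs
begin

text \<open>Write \<open>x\<^sub>v = w(u,v)/deg(v)\<close> for the share of the mutant \<open>u\<close> in the weighted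
neighbourhood of \<open>v\<close>.  A direct computation gives \<open>gamma_Bd = r/(r + A)\<close> with \<open>A = \<Sum>\<^sub>v x\<^sub>v\<close>
and \<open>gamma_dB = B/(B + 1)\<close> with \<open>B = \<Sum>\<^sub>v f(x\<^sub>v)\<close>, where \<open>f(x) = r x/(1 + (r - 1) x)\<close> is
concave.  On \<open>K\<^sub>N\<close> every share equals \<open>1/(N-1)\<close>, so \<open>A = 1\<close> there.  The tangent
line of \<open>f\<close> at \<open>1/(N-1)\<close> bounds \<open>B\<close> by its value on \<open>K\<^sub>N\<close> plus a positive multiple
of \<open>A - 1\<close>: if \<open>A > 1\<close> the Bd value drops, if \<open>A < 1\<close> the dB value drops, and if
\<open>A = 1\<close> the dB value cannot exceed that of \<open>K\<^sub>N\<close>.\<close>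

definition share :: "'a set \<Rightarrow> ('a \<Rightarrow> 'a \<Rightarrow> real) \<Rightarrow> 'a \<Rightarrow> 'a \<Rightarrow> real" where
  "share V w u v = w u v / wdeg V w v"

text \<open>The probability that a dying node \<open>v\<close> is replaced by the single mutant, when
the mutant holds the share \<open>x\<close> of the neighbourhood weight of \<open>v\<close>.\<close>
definition dB_win :: "real \<Rightarrow> real \<Rightarrow> real" where
  "dB_win r x = r * x / (1 + (r - 1) * x)"

lemma wgraph_finite: "wgraph V w \<Longrightarrow> finite V"
  by (simp add: wgraph_def)

lemma wgraph_sym: "wgraph V w \<Longrightarrow> w x y = w y x"
  by (simp add: wgraph_def)

lemma wgraph_nonneg: "wgraph V w \<Longrightarrow> 0 \<le> w x y"
  by (simp add: wgraph_def)

lemma wgraph_loop_free: "wgraph V w \<Longrightarrow> w x x = 0"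
  by (simp add: wgraph_def)

lemma wgraph_edge_in: "wgraph V w \<Longrightarrow> w x y > 0 \<Longrightarrow> x \<in> V \<and> y \<in> V"
  unfolding wgraph_def by blast

lemma wdeg_nonneg: "wgraph V w \<Longrightarrow> 0 \<le> wdeg V w x"
  unfolding wdeg_def by (simp add: sum_nonneg wgraph_nonneg)

lemma wdeg_eq_sum_remove:
  assumes "wgraph V w" "u \<in> V"
  shows "wdeg V w u = (\<Sum>v\<in>V - {u}. w u v)"
  using sum.remove[OF wgraph_finite[OF assms(1)] assms(2), of "w u"]
  by (simp add: wdeg_def wgraph_loop_free[OF assms(1)])

lemma weight_le_wdeg:
  assumes g: "wgraph V w"
  shows "w u v \<le> wdeg V w v"
proof (cases "w u v > 0")
  case True
  then have "u \<in> V" using wgraph_edge_in[OF g] by blast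
  then have "w v u \<le> wdeg V w v"
    unfolding wdeg_def
    by (rule member_le_sum) (simp_all add: wgraph_nonneg[OF g] wgraph_finite[OF g])
  then show ?thesis by (simp add: wgraph_sym[OF g])
next
  case False
  then show ?thesis using wgraph_nonneg[OF g, of u v] wdeg_nonneg[OF g, of v] by simp
qed

lemma share_nonneg: "wgraph V w \<Longrightarrow> 0 \<le> share V w u v"
  unfolding share_def by (simp add: wgraph_nonneg wdeg_nonneg)

lemma wdeg_pos_if_connected:
  assumes g: "wgraph V w" and conn: "connected_wgraph V w"
    and two: "card V \<ge> 2" and u: "u \<in> V"
  shows "wdeg V w u > 0"
proof -
  have "\<not> V \<subseteq> {u}"
    using two card_mono[of "{u}" V] by auto
  then obtain y where y: "y \<in> V" "y \<noteq> u" by blast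
  have "(u, y) \<in> {(a, b). w a b > 0}\<^sup>*"
    using conn u y(1) unfolding connected_wgraph_def by blast
  then obtain z where "w u z > 0"
    using y(2) by (cases rule: converse_rtranclE) auto
  then show ?thesis
    using weight_le_wdeg[OF g, of z u] by (simp add: wgraph_sym[OF g, of u z])
qed

lemma real_card_Diff_singleton:
  "finite V \<Longrightarrow> u \<in> V \<Longrightarrow> real (card (V - {u})) = real (card V) - 1"
proof -
  assume "finite V" "u \<in> V"
  then have "card V \<ge> 1" by (simp add: Suc_le_eq card_gt_0_iff) blast
  with \<open>u \<in> V\<close> show ?thesis by (simp add: card_Diff_singleton of_nat_diff)
qed

lemma sum_fit_singleton:
  assumes "finite V" "u \<in> V"
  shows "(\<Sum>z\<in>V. fit {u} r z) = r + (real (card V) - 1)"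
proof -
  have "(\<Sum>z\<in>V. fit {u} r z) = r + (\<Sum>z\<in>V - {u}. 1)"
    using sum.remove[OF assms, of "fit {u} r"] by (simp add: fit_def)
  then show ?thesis using real_card_Diff_singleton[OF assms] by simp
qed

lemma sum_fit_weight_singleton:
  assumes g: "wgraph V w" and u: "u \<in> V"
  shows "(\<Sum>z\<in>V. fit {u} r z * w z v) = (r - 1) * w u v + wdeg V w v"
proof -
  have fin: "finite V" using wgraph_finite[OF g] .
  have "(\<Sum>z\<in>V. fit {u} r z * w z v) = r * w u v + (\<Sum>z\<in>V - {u}. w v z)"
    using sum.remove[OF fin u, of "\<lambda>z. fit {u} r z * w z v"]
    by (simp add: fit_def wgraph_sym[OF g, of _ v])
  moreover have "wdeg V w v = w v u + (\<Sum>z\<in>V - {u}. w v z)"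
    unfolding wdeg_def using sum.remove[OF fin u] by blast
  ultimately show ?thesis by (simp add: wgraph_sym[OF g, of u v] algebra_simps)
qed

lemma gamma_Bd_eq:
  assumes g: "wgraph V w" and u: "u \<in> V" and deg: "wdeg V w u > 0" and r: "r > 0"
  shows "gamma_Bd V w r u = r / (r + (\<Sum>v\<in>V - {u}. share V w u v))"
proof -
  define F where "F = (\<Sum>z\<in>V. fit {u} r z)"
  define A where "A = (\<Sum>v\<in>V - {u}. share V w u v)"
  have "card V \<ge> 1"
    using wgraph_finite[OF g] u by (simp add: Suc_le_eq card_gt_0_iff) blast
  then have F: "F > 0"
    unfolding F_def using sum_fit_singleton[OF wgraph_finite[OF g] u] r by simp
  have "(\<Sum>v\<in>V - {u}. Bd_rep V w {u} r u v) = r / F / wdeg V w u * (\<Sum>v\<in>V - {u}. w u v)"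
    unfolding sum_distrib_left by (rule sum.cong) (auto simp: Bd_rep_def fit_def F_def)
  then have inc: "(\<Sum>v\<in>V - {u}. Bd_rep V w {u} r u v) = r / F"
    using deg by (simp add: wdeg_eq_sum_remove[OF g u, symmetric])
  have "(\<Sum>v\<in>V - {u}. Bd_rep V w {u} r v u) = (\<Sum>v\<in>V - {u}. share V w u v / F)"
    by (rule sum.cong) (auto simp: Bd_rep_def fit_def F_def share_def wgraph_sym[OF g, of _ u])
  then have dec: "(\<Sum>v\<in>V - {u}. Bd_rep V w {u} r v u) = A / F"
    by (simp add: A_def sum_divide_distrib)
  have "gamma_Bd V w r u = (r / F) / (r / F + A / F)"
    unfolding gamma_def Let_def inc dec ..
  also have "\<dots> = r / (r + A)"
    using F by (simp add: add_divide_distrib[symmetric])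
  finally show ?thesis unfolding A_def .
qed

lemma dB_rep_from_mutant:
  assumes g: "wgraph V w" and u: "u \<in> V" and v: "v \<noteq> u"
  shows "dB_rep V w {u} r u v = dB_win r (share V w u v) / real (card V)"
proof -
  have rep: "dB_rep V w {u} r u v = r * w u v / ((r - 1) * w u v + wdeg V w v) / real (card V)"
    unfolding dB_rep_def sum_fit_weight_singleton[OF g u] by (simp add: fit_def)
  show ?thesis
  proof (cases "w u v = 0")
    case True
    then show ?thesis by (simp add: rep dB_win_def share_def)
  next
    case False
    then have "wdeg V w v > 0"
      using wgraph_nonneg[OF g, of u v] weight_le_wdeg[OF g, of u v] by linarith
    then show ?thesis by (simp add: rep dB_win_def share_def field_simps)
  qed
qed

lemma gamma_dB_eq:
  assumes g: "wgraph V w" and u: "u \<in> V" and deg: "wdeg V w u > 0"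
  shows "gamma_dB V w r u =
    (\<Sum>v\<in>V - {u}. dB_win r (share V w u v)) / ((\<Sum>v\<in>V - {u}. dB_win r (share V w u v)) + 1)"
proof -
  define N where "N = real (card V)"
  define B where "B = (\<Sum>v\<in>V - {u}. dB_win r (share V w u v))"
  have N: "N > 0"
    unfolding N_def using wgraph_finite[OF g] u by (simp add: card_gt_0_iff) blast
  have inc: "(\<Sum>v\<in>V - {u}. dB_rep V w {u} r u v) = B / N"
    unfolding B_def N_def sum_divide_distrib
    by (rule sum.cong) (auto simp: dB_rep_from_mutant[OF g u])
  have "(\<Sum>z\<in>V. fit {u} r z * w z u) = wdeg V w u"
    using sum_fit_weight_singleton[OF g u, of r u] by (simp add: wgraph_loop_free[OF g])
  then have "(\<Sum>v\<in>V - {u}. dB_rep V w {u} r v u) = 1 / N / wdeg V w u * (\<Sum>v\<in>V - {u}. w u v)"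
    unfolding dB_rep_def sum_distrib_left
    by (intro sum.cong) (auto simp: N_def fit_def wgraph_sym[OF g, of _ u])
  then have dec: "(\<Sum>v\<in>V - {u}. dB_rep V w {u} r v u) = 1 / N"
    using deg by (simp add: wdeg_eq_sum_remove[OF g u, symmetric])
  have "gamma_dB V w r u = (B / N) / (B / N + 1 / N)"
    unfolding gamma_def Let_def inc dec ..
  also have "\<dots> = B / (B + 1)"
    using N by (simp add: add_divide_distrib[symmetric])
  finally show ?thesis unfolding B_def .
qed

lemma dB_win_nonneg: "r \<ge> 1 \<Longrightarrow> x \<ge> 0 \<Longrightarrow> dB_win r x \<ge> 0"
  unfolding dB_win_def by simp

text \<open>Concavity of \<^const>\<open>dB_win\<close>: the gap to the tangent at \<open>c\<close> is
\<open>r (r - 1) (x - c)\<^sup>2 / ((1 + (r - 1) c)\<^sup>2 (1 + (r - 1) x))\<close>.\<close>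
lemma dB_win_le_tangent:
  assumes r: "r \<ge> 1" and x: "x \<ge> 0" and c: "c \<ge> 0"
  shows "dB_win r x \<le> dB_win r c + r / (1 + (r - 1) * c)\<^sup>2 * (x - c)"
proof -
  define a where "a = r - 1"
  have a: "a \<ge> 0" and pc: "1 + a * c > 0" and px: "1 + a * x > 0"
    using r x c by (simp_all add: a_def add_pos_nonneg)
  have "(a + 1) * c / (1 + a * c) + (a + 1) / (1 + a * c)\<^sup>2 * (x - c) - (a + 1) * x / (1 + a * x)
        = (a + 1) * a * (x - c)\<^sup>2 / ((1 + a * c)\<^sup>2 * (1 + a * x))"
    using pc px by (simp add: divide_simps power2_eq_square) algebra
  also have "\<dots> \<ge> 0" using a pc px by simp
  finally show ?thesis by (simp add: dB_win_def a_def)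
qed

lemma sum_dB_win_le:
  fixes S :: "'b set" and x :: "'b \<Rightarrow> real"
  assumes fin: "finite S" and ne: "S \<noteq> {}" and r: "r \<ge> 1" and x: "\<And>v. v \<in> S \<Longrightarrow> x v \<ge> 0"
  defines "n \<equiv> real (card S)"
  shows "(\<Sum>v\<in>S. dB_win r (x v))
    \<le> n * dB_win r (1 / n) + r / (1 + (r - 1) / n)\<^sup>2 * ((\<Sum>v\<in>S. x v) - 1)"
proof -
  define k where "k = r / (1 + (r - 1) / n)\<^sup>2"
  have n: "n > 0" unfolding n_def using fin ne by (simp add: card_gt_0_iff)
  have "(\<Sum>v\<in>S. dB_win r (x v)) \<le> (\<Sum>v\<in>S. dB_win r (1 / n) + k * (x v - 1 / n))"
    unfolding k_def
    by (intro sum_mono) (use dB_win_le_tangent[OF r x, of _ "1 / n"] n in simp)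
  also have "\<dots> = n * dB_win r (1 / n) + k * ((\<Sum>v\<in>S. x v) - 1)"
    using n by (simp add: sum.distrib sum_subtractf sum_distrib_left[symmetric] n_def algebra_simps)
  finally show ?thesis unfolding k_def .
qed

lemma wgraph_complete_w: "finite V \<Longrightarrow> wgraph V (complete_w V)"
  unfolding wgraph_def complete_w_def by auto

lemma wdeg_complete_w:
  assumes "finite V" "v \<in> V"
  shows "wdeg V (complete_w V) v = real (card V) - 1"
proof -
  have "wdeg V (complete_w V) v = (\<Sum>y\<in>V - {v}. 1)"
    unfolding wdeg_eq_sum_remove[OF wgraph_complete_w[OF assms(1)] assms(2)]
    by (rule sum.cong) (auto simp: complete_w_def assms(2))
  then show ?thesis using real_card_Diff_singleton[OF assms] by simp
qed

lemma share_complete_w: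
  assumes "finite V" "u \<in> V" "v \<in> V - {u}"
  shows "share V (complete_w V) u v = 1 / real (card (V - {u}))"
proof -
  have "share V (complete_w V) u v = 1 / (real (card V) - 1)"
    using assms by (auto simp: share_def wdeg_complete_w complete_w_def)
  then show ?thesis by (simp only: real_card_Diff_singleton assms(1,2))
qed

lemma gamma_Bd_complete_w:
  assumes fin: "finite V" and two: "card V \<ge> 2" and u: "u \<in> V" and r: "r > 0"
  shows "gamma_Bd V (complete_w V) r u = r / (r + 1)"
proof -
  have n: "real (card (V - {u})) \<ge> 1"
    using two real_card_Diff_singleton[OF fin u] by simp
  have "(\<Sum>v\<in>V - {u}. share V (complete_w V) u v) = 1"
    using n by (simp add: share_complete_w[OF fin u])
  moreover have "wdeg V (complete_w V) u > 0"
    using two by (simp add: wdeg_complete_w[OF fin u])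
  ultimately show ?thesis
    using gamma_Bd_eq[OF wgraph_complete_w[OF fin] u _ r] by simp
qed

lemma gamma_dB_complete_w:
  fixes r :: real
  assumes fin: "finite V" and two: "card V \<ge> 2" and u: "u \<in> V"
  defines "BK \<equiv> real (card (V - {u})) * dB_win r (1 / real (card (V - {u})))"
  shows "gamma_dB V (complete_w V) r u = BK / (BK + 1)"
proof -
  have "(\<Sum>v\<in>V - {u}. dB_win r (share V (complete_w V) u v)) = BK"
    by (simp add: share_complete_w[OF fin u] BK_def)
  moreover have "wdeg V (complete_w V) u > 0"
    using two by (simp add: wdeg_complete_w[OF fin u])
  ultimately show ?thesis
    using gamma_dB_eq[OF wgraph_complete_w[OF fin] u] by simp
qed

lemma tangent_bound_trichotomy:
  fixes r k A B BK :: real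
  assumes r: "r > 0" and k: "k > 0" and B: "B \<ge> 0" and tangent: "B \<le> BK + k * (A - 1)"
  shows "r / (r + A) < r / (r + 1) \<or> B / (B + 1) < BK / (BK + 1)
    \<or> (r / (r + A) = r / (r + 1) \<and> B / (B + 1) = BK / (BK + 1))"
proof -
  have dB_less: "B / (B + 1) < BK / (BK + 1)" if "B < BK"
    using that B by (simp add: field_simps)
  consider "A > 1" | "A < 1" | "A = 1" "B < BK" | "A = 1" "B = BK"
    using tangent by fastforce
  then show ?thesis
  proof cases
    case 1
    then have "r / (r + A) < r / (r + 1)" using r by (simp add: divide_strict_left_mono)
    then show ?thesis by blast
  next
    case 2
    then have "k * (A - 1) < 0" using k by (simp add: mult_pos_neg)
    then have "B < BK" using tangent by linarith
    then show ?thesis using dB_less by blast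
  next
    case 3
    then show ?thesis using dB_less by blast
  next
    case 4
    then show ?thesis by blast
  qed
qed

theorem theorem2:
  fixes V :: "'a set" and w :: "'a \<Rightarrow> 'a \<Rightarrow> real" and u :: 'a and r :: real
  assumes "wgraph V w" and "connected_wgraph V w" and "card V \<ge> 2"
    and "u \<in> V" and "r \<ge> 1"
  shows "gamma_Bd V w r u < gamma_Bd V (complete_w V) r u
       \<or> gamma_dB V w r u < gamma_dB V (complete_w V) r u
       \<or> (gamma_Bd V w r u = gamma_Bd V (complete_w V) r u
          \<and> gamma_dB V w r u = gamma_dB V (complete_w V) r u)"
proof -
  note g = assms(1) and two = assms(3) and u = assms(4) and r = assms(5)
  have fin: "finite V" using wgraph_finite[OF g] .
  define n where "n = real (card (V - {u}))"
  define A where "A = (\<Sum>v\<in>V - {u}. share V w u v)"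
  define B where "B = (\<Sum>v\<in>V - {u}. dB_win r (share V w u v))"
  define BK where "BK = n * dB_win r (1 / n)"
  have deg: "wdeg V w u > 0" using wdeg_pos_if_connected[OF g assms(2) two u] .
  have n_ge_1: "n \<ge> 1" using two real_card_Diff_singleton[OF fin u] by (simp add: n_def)
  then have "1 + (r - 1) / n > 0" using r by (simp add: add_pos_nonneg)
  then have slope: "r / (1 + (r - 1) / n)\<^sup>2 > 0" using r by simp
  have "V - {u} \<noteq> {}" using n_ge_1 by (intro notI) (simp add: n_def)
  then have "B \<le> BK + r / (1 + (r - 1) / n)\<^sup>2 * (A - 1)"
    unfolding A_def B_def BK_def n_def
    by (intro sum_dB_win_le) (simp_all add: fin r share_nonneg[OF g])
  moreover have "B \<ge> 0"
    unfolding B_def by (simp add: sum_nonneg dB_win_nonneg r share_nonneg[OF g])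
  ultimately have trichotomy: "r / (r + A) < r / (r + 1) \<or> B / (B + 1) < BK / (BK + 1)
      \<or> (r / (r + A) = r / (r + 1) \<and> B / (B + 1) = BK / (BK + 1))"
    using r by (intro tangent_bound_trichotomy[OF _ slope]) simp_all
  have "gamma_Bd V w r u = r / (r + A)" "gamma_Bd V (complete_w V) r u = r / (r + 1)"
    using gamma_Bd_eq[OF g u deg] gamma_Bd_complete_w[OF fin two u] r by (simp_all add: A_def)
  moreover have "gamma_dB V w r u = B / (B + 1)" "gamma_dB V (complete_w V) r u = BK / (BK + 1)"
    using gamma_dB_eq[OF g u deg] gamma_dB_complete_w[OF fin two u]
    by (simp_all add: B_def BK_def n_def)
  ultimately show ?thesis using trichotomy by (simp only:)
qed

end
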